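(* For $n \ge 2$, let $R_n$ denote the outcome of Domineering on the $2 \times n$ rectangle and $T_n$ the outcome on the $2 \times n$ torus. Then: (i) if $R_n = H$ then $T_n = H$; (ii) if $R_n = {\rm 1st}$ and $R_{n-1} \in \{{\rm 1st}, H\}$ then $T_n = H$; (iii) if $R_n = {\rm 1st}$ and $R_{n-1} \in \{{\rm 2nd}, V\}$ then $T_n = {\rm 1st}$; (iv) if $R_n \in \{{\rm 2nd}, V\}$ and $R_{n-1} \in \{{\rm 1st}, H\}$ then $T_n \in \{{\rm 2nd}, H\}$.
   Context: Domineering: Vera places vertical dominoes (covering two vertically adjacent empty cells), Hepzibah places horizontal dominoes (covering two horizontally adjacent empty cells); players alternate, and a player who cannot move on her turn loses. The $2\times n$ rectangle has $2$ rows and $n$ columns. The $2 \times n$ torus is the $2\times n$ array of cells with both pairs of opposite edges identified, so horizontal adjacency wraps around from column $n$ to column $1$ (and a vertical domino occupies both cells of a column). The outcome class is $V$ if Vera wins with optimal play regardless of who moves first, $H$ if Hepzibah wins regardless of who moves first, ${\rm 1st}$ if the first player wins, and ${\rm 2nd}$ if the second player wins. *)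

theory Defs
  imports Main
begin

text \<open>Domineering on 2 x n boards. Cells are pairs (row, column) with row < 2 and
  column < n. A position is given by the set F of still-empty cells.\<close>

type_synonym cell = "nat \<times> nat"

datatype player = Vera | Hepzibah

fun opp :: "player \<Rightarrow> player" where
  "opp Vera = Hepzibah"
| "opp Hepzibah = Vera"

datatype outcome = OV | OH | OFirst | OSecond

definition board :: "nat \<Rightarrow> cell set" where
  "board n = {(r, c). r < 2 \<and> c < n}"

definition vert_moves :: "nat \<Rightarrow> cell set \<Rightarrow> cell set set" where
  "vert_moves n F = {{(0, c), (1, c)} | c. c < n \<and> (0, c) \<in> F \<and> (1, c) \<in> F}"

definition horiz_rect_moves :: "nat \<Rightarrow> cell set \<Rightarrow> cell set set" where
  "horiz_rect_moves n F =
     {{(r, c), (r, c + 1)} | r c. r < 2 \<and> c + 1 < n \<and> (r, c) \<in> F \<and> (r, c + 1) \<in> F}"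

definition horiz_torus_moves :: "nat \<Rightarrow> cell set \<Rightarrow> cell set set" where
  "horiz_torus_moves n F =
     {{(r, c), (r, (c + 1) mod n)} | r c. r < 2 \<and> c < n \<and> (r, c) \<in> F \<and> (r, (c + 1) mod n) \<in> F}"

definition rect_moves :: "nat \<Rightarrow> player \<Rightarrow> cell set \<Rightarrow> cell set set" where
  "rect_moves n p F = (case p of Vera \<Rightarrow> vert_moves n F | Hepzibah \<Rightarrow> horiz_rect_moves n F)"

definition torus_moves :: "nat \<Rightarrow> player \<Rightarrow> cell set \<Rightarrow> cell set set" where
  "torus_moves n p F = (case p of Vera \<Rightarrow> vert_moves n F | Hepzibah \<Rightarrow> horiz_torus_moves n F)"

text \<open>Every move covers two
  empty cells, so with k > card F / 2 the bound is never reached; we use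
  k = Suc (card F), making this the exact notion of a win for the mover.\<close>
fun wins_k :: "nat \<Rightarrow> (player \<Rightarrow> cell set \<Rightarrow> cell set set) \<Rightarrow> player \<Rightarrow> cell set \<Rightarrow> bool" where
  "wins_k 0 mv p F = False"
| "wins_k (Suc k) mv p F = (\<exists>D \<in> mv p F. \<not> wins_k k mv (opp p) (F - D))"

definition wins :: "(player \<Rightarrow> cell set \<Rightarrow> cell set set) \<Rightarrow> player \<Rightarrow> cell set \<Rightarrow> bool" where
  "wins mv p F = wins_k (Suc (card F)) mv p F"

definition outcome_of :: "(player \<Rightarrow> cell set \<Rightarrow> cell set set) \<Rightarrow> cell set \<Rightarrow> outcome" where
  "outcome_of mv F =
    (let v = wins mv Vera F; h = wins mv Hepzibah F in
     if v \<and> h then OFirst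
     else if v \<and> \<not> h then OV
     else if \<not> v \<and> h then OH
     else OSecond)"

definition rect_outcome :: "nat \<Rightarrow> outcome" where
  "rect_outcome n = outcome_of (rect_moves n) (board n)"

definition torus_outcome :: "nat \<Rightarrow> outcome" where
  "torus_outcome n = outcome_of (torus_moves n) (board n)"

end

(* Hepzibah's moves on the rectangle are among her moves on the torus, while Vera's moves are
   the same on both boards; so a Hepzibah win on the rectangle transfers to the torus and a Vera
   win on the torus transfers to the rectangle.  Moreover Vera's opening moves on the torus are
   all equivalent under rotation, and after one of them the torus has become a 2 x (n-1)
   rectangle with Hepzibah to move.  So Vera wins moving first on the torus of width n iff
   Hepzibah loses moving first on the rectangle of width n - 1, and the four claims follow by
   comparing outcome classes. *)

theory Submission
  imports Defs
begin

section \<open>Games given by move functions\<close>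

definition proper_moves :: "(player \<Rightarrow> cell set \<Rightarrow> cell set set) \<Rightarrow> bool" where
  "proper_moves mv \<longleftrightarrow> (\<forall>p G D. D \<in> mv p G \<longrightarrow> D \<subseteq> G \<and> D \<noteq> {})"

lemma opp_opp [simp]: "opp (opp p) = p"
  by (cases p) simp_all

lemma wins_k_stable:
  assumes "proper_moves mv" "finite F" "card F < k" "card F < k'"
  shows "wins_k k mv p F = wins_k k' mv p F"
  using assms(2-)
proof (induction k arbitrary: k' p F)
  case 0
  then show ?case by simp
next
  case (Suc k)
  then obtain k'' where k': "k' = Suc k''"
    by (cases k') auto
  have "wins_k k mv (opp p) (F - D) = wins_k k'' mv (opp p) (F - D)" if "D \<in> mv p F" for D
  proof -
    have "F - D \<subset> F"
      using that assms(1) unfolding proper_moves_def by blast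
    then have "card (F - D) < card F"
      using Suc.prems(1) by (rule psubset_card_mono[rotated])
    moreover have "finite (F - D)"
      using Suc.prems(1) by simp
    ultimately show ?thesis
      using Suc.IH[of "F - D" k'' "opp p"] Suc.prems k' by simp
  qed
  then show ?case
    using k' by auto
qed

lemma wins_iff:
  assumes "proper_moves mv" "finite F"
  shows "wins mv p F \<longleftrightarrow> (\<exists>D \<in> mv p F. \<not> wins mv (opp p) (F - D))"
proof -
  have "wins_k (card F) mv (opp p) (F - D) = wins mv (opp p) (F - D)" if "D \<in> mv p F" for D
  proof -
    have "F - D \<subset> F"
      using that assms(1) unfolding proper_moves_def by blast
    then have "card (F - D) < card F"
      using assms(2) by (rule psubset_card_mono[rotated])
    then show ?thesis
      unfolding wins_def
      using wins_k_stable[OF assms(1), of "F - D" "card F" "Suc (card (F - D))"] assms(2) by simp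
  qed
  then show ?thesis
    unfolding wins_def by simp
qed

lemma wins_k_mono:
  assumes "\<And>G. mv p G \<subseteq> mv' p G" "\<And>G. mv' (opp p) G \<subseteq> mv (opp p) G"
    and "wins_k k mv p F"
  shows "wins_k k mv' p F"
  using assms
proof (induction k arbitrary: p F mv mv')
  case 0
  then show ?case by simp
next
  case (Suc k)
  then obtain D where "D \<in> mv p F" "\<not> wins_k k mv (opp p) (F - D)"
    by auto
  moreover have "\<not> wins_k k mv' (opp p) (F - D)"
    using Suc.IH[of mv' "opp p" mv] Suc.prems(1,2) \<open>\<not> wins_k k mv (opp p) (F - D)\<close> by auto
  ultimately show ?case
    using Suc.prems(1) by auto
qed

lemma wins_mono:
  assumes "\<And>G. mv p G \<subseteq> mv' p G" "\<And>G. mv' (opp p) G \<subseteq> mv (opp p) G"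
    and "wins mv p F"
  shows "wins mv' p F"
  using assms wins_k_mono unfolding wins_def by blast

lemma wins_k_cong:
  assumes "\<And>p G. G \<subseteq> A \<Longrightarrow> mv p G = mv' p G" "\<And>p G D. D \<in> mv p G \<Longrightarrow> D \<subseteq> G"
    and "G \<subseteq> A"
  shows "wins_k k mv p G = wins_k k mv' p G"
  using assms(3)
proof (induction k arbitrary: p G)
  case 0
  then show ?case by simp
next
  case (Suc k)
  have "G - D \<subseteq> A" for D
    using Suc.prems by blast
  then show ?case
    using Suc.IH assms(1)[OF Suc.prems] by simp
qed

lemma wins_cong:
  assumes "\<And>p G. G \<subseteq> A \<Longrightarrow> mv p G = mv' p G" "\<And>p G D. D \<in> mv p G \<Longrightarrow> D \<subseteq> G"
    and "G \<subseteq> A"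
  shows "wins mv p G = wins mv' p G"
  unfolding wins_def using wins_k_cong[OF assms] .

lemma wins_k_image:
  assumes "inj_on f A" "\<And>p G. G \<subseteq> A \<Longrightarrow> mv p (f ` G) = image f ` mv p G"
    and "\<And>p G D. D \<in> mv p G \<Longrightarrow> D \<subseteq> G" and "G \<subseteq> A"
  shows "wins_k k mv p (f ` G) = wins_k k mv p G"
  using assms(4)
proof (induction k arbitrary: p G)
  case 0
  then show ?case by simp
next
  case (Suc k)
  have "wins_k k mv (opp p) (f ` G - f ` D) = wins_k k mv (opp p) (G - D)" if "D \<in> mv p G" for D
  proof -
    have "D \<subseteq> G"
      using assms(3) that .
    then have "f ` G - f ` D = f ` (G - D)"
      using inj_on_image_set_diff[OF assms(1)] Suc.prems by blast
    moreover have "G - D \<subseteq> A"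
      using Suc.prems by blast
    ultimately show ?thesis
      using Suc.IH[of "G - D" "opp p"] by simp
  qed
  then show ?case
    using assms(2)[OF Suc.prems] by auto
qed

lemma wins_image:
  assumes "inj_on f A" "\<And>p G. G \<subseteq> A \<Longrightarrow> mv p (f ` G) = image f ` mv p G"
    and "\<And>p G D. D \<in> mv p G \<Longrightarrow> D \<subseteq> G" and "G \<subseteq> A"
  shows "wins mv p (f ` G) = wins mv p G"
proof -
  have "card (f ` G) = card G"
    using assms(1,4) by (meson card_image inj_on_subset)
  then show ?thesis
    unfolding wins_def using wins_k_image[of f A mv G] assms by simp
qed

section \<open>Domineering on the rectangle and on the torus\<close>

definition col :: "nat \<Rightarrow> cell set" where
  "col c = {(0, c), (1, c)}"

definition rot :: "nat \<Rightarrow> cell \<Rightarrow> cell" where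
  "rot n = (\<lambda>(r, c). (r, (c + 1) mod n))"

lemma finite_board: "finite (board n)"
proof -
  have "board n \<subseteq> {..<2} \<times> {..<n}"
    by (auto simp: board_def)
  then show ?thesis
    by (rule finite_subset) simp
qed

lemma proper_torus_moves: "proper_moves (torus_moves n)"
  unfolding proper_moves_def
  by (auto simp: torus_moves_def vert_moves_def horiz_torus_moves_def split: player.splits)

lemma torus_move_subset: "D \<in> torus_moves n p G \<Longrightarrow> D \<subseteq> G"
  using proper_torus_moves unfolding proper_moves_def by blast

lemma rect_moves_subset_torus_moves: "rect_moves n p G \<subseteq> torus_moves n p G"
  by (cases p) (fastforce simp: rect_moves_def torus_moves_def horiz_rect_moves_def horiz_torus_moves_def)+

lemma rect_wins_Hepzibah_imp_torus:
  "wins (rect_moves n) Hepzibah F \<Longrightarrow> wins (torus_moves n) Hepzibah F"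
  by (rule wins_mono[OF rect_moves_subset_torus_moves]) (simp add: rect_moves_def torus_moves_def)

lemma torus_wins_Vera_imp_rect:
  "wins (torus_moves n) Vera F \<Longrightarrow> wins (rect_moves n) Vera F"
proof (rule wins_mono[where p = Vera])
  show "torus_moves n Vera G \<subseteq> rect_moves n Vera G" for G
    by (simp add: rect_moves_def torus_moves_def)
  show "rect_moves n (opp Vera) G \<subseteq> torus_moves n (opp Vera) G" for G
    by (simp add: rect_moves_subset_torus_moves)
qed

lemma image_Collect_subset_eq:
  assumes "inj_on f A" "M \<subseteq> Pow A" "G \<subseteq> A"
  shows "image f ` {D \<in> M. D \<subseteq> G} = {D \<in> image f ` M. D \<subseteq> f ` G}"
proof -
  have "f ` D \<subseteq> f ` G \<longleftrightarrow> D \<subseteq> G" if "D \<subseteq> A" for D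
    using inj_on_image_mem_iff[OF assms(1)] assms(3) that by blast
  then show ?thesis
    using assms(2) by blast
qed

lemma vert_moves_restrict: "vert_moves n G = {D \<in> vert_moves n (board n). D \<subseteq> G}"
  unfolding vert_moves_def board_def by auto

lemma horiz_torus_moves_restrict:
  "horiz_torus_moves n G = {D \<in> horiz_torus_moves n (board n). D \<subseteq> G}"
  unfolding horiz_torus_moves_def board_def by auto blast

lemma torus_moves_restrict: "torus_moves n p G = {D \<in> torus_moves n p (board n). D \<subseteq> G}"
  using vert_moves_restrict[of n G] horiz_torus_moves_restrict[of n G]
  by (cases p) (simp_all add: torus_moves_def)

lemma inj_on_rot: "inj_on (rot n) (board n)"
  by (rule inj_onI) (auto simp: rot_def board_def mod_Suc split: if_splits)

lemma rot_board_subset: "rot n ` board n \<subseteq> board n"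
  by (auto simp: rot_def board_def)

lemma rot_board: "rot n ` board n = board n"
  by (rule endo_inj_surj[OF finite_board rot_board_subset inj_on_rot])

lemma rot_col: "rot n ` col c = col ((c + 1) mod n)"
  by (auto simp: rot_def col_def)

lemma rot_vert_dominoes_subset:
  "image (rot n) ` vert_moves n (board n) \<subseteq> vert_moves n (board n)"
  unfolding vert_moves_def board_def rot_def by auto

lemma rot_horiz_torus_dominoes_subset:
  "image (rot n) ` horiz_torus_moves n (board n) \<subseteq> horiz_torus_moves n (board n)"
proof
  fix D assume "D \<in> image (rot n) ` horiz_torus_moves n (board n)"
  then obtain r c where "r < 2" "c < n"
    and "D = {(r, (c + 1) mod n), (r, ((c + 1) mod n + 1) mod n)}"
    unfolding horiz_torus_moves_def board_def rot_def by auto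
  moreover have "(c + 1) mod n < n" "((c + 1) mod n + 1) mod n < n"
    using \<open>c < n\<close> by simp_all
  ultimately show "D \<in> horiz_torus_moves n (board n)"
    unfolding horiz_torus_moves_def board_def by blast
qed

lemma rot_torus_dominoes:
  "image (rot n) ` torus_moves n p (board n) = torus_moves n p (board n)"
proof (rule endo_inj_surj)
  have "torus_moves n p (board n) \<subseteq> Pow (board n)"
    using torus_move_subset by blast
  then show "finite (torus_moves n p (board n))"
    using finite_board by (meson finite_Pow_iff finite_subset)
  show "inj_on (image (rot n)) (torus_moves n p (board n))"
    using inj_on_image_Pow[OF inj_on_rot] \<open>torus_moves n p (board n) \<subseteq> Pow (board n)\<close>
    by (rule inj_on_subset)
  show "image (rot n) ` torus_moves n p (board n) \<subseteq> torus_moves n p (board n)"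
    using rot_vert_dominoes_subset rot_horiz_torus_dominoes_subset
    by (cases p) (simp_all add: torus_moves_def)
qed

lemma torus_moves_rot:
  assumes "G \<subseteq> board n"
  shows "torus_moves n p (rot n ` G) = image (rot n) ` torus_moves n p G"
proof -
  let ?M = "torus_moves n p (board n)"
  have "?M \<subseteq> Pow (board n)"
    using torus_move_subset by blast
  have "image (rot n) ` torus_moves n p G = image (rot n) ` {D \<in> ?M. D \<subseteq> G}"
    by (subst torus_moves_restrict) (rule refl)
  also have "\<dots> = {D \<in> image (rot n) ` ?M. D \<subseteq> rot n ` G}"
    by (rule image_Collect_subset_eq[OF inj_on_rot \<open>?M \<subseteq> Pow (board n)\<close> assms])
  also have "\<dots> = {D \<in> ?M. D \<subseteq> rot n ` G}"
    by (simp only: rot_torus_dominoes)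
  also have "\<dots> = torus_moves n p (rot n ` G)"
    by (rule torus_moves_restrict[symmetric])
  finally show ?thesis ..
qed

lemma wins_torus_minus_col:
  assumes "c < n"
  shows "wins (torus_moves n) p (board n - col c) = wins (torus_moves n) p (board n - col 0)"
  using assms
proof (induction c)
  case 0
  then show ?case by simp
next
  case (Suc c)
  have "col c \<subseteq> board n"
    using Suc.prems by (auto simp: col_def board_def)
  then have "rot n ` (board n - col c) = board n - col (Suc c)"
    using inj_on_image_set_diff[OF inj_on_rot] rot_board rot_col[of n c] Suc.prems by simp
  moreover have "wins (torus_moves n) p (rot n ` (board n - col c)) = wins (torus_moves n) p (board n - col c)"
    by (rule wins_image[of "rot n" "board n"])
      (simp_all add: inj_on_rot torus_moves_rot torus_move_subset Diff_subset)
  ultimately show ?case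
    using Suc by simp
qed

lemma horiz_torus_moves_eq_rect:
  assumes "G \<subseteq> board (n - 1)"
  shows "horiz_torus_moves n G = horiz_rect_moves (n - 1) G"
proof (intro equalityI subsetI)
  fix D assume "D \<in> horiz_torus_moves n G"
  then obtain r c where D: "D = {(r, c), (r, (c + 1) mod n)}" "r < 2"
    and G: "(r, c) \<in> G" "(r, (c + 1) mod n) \<in> G"
    unfolding horiz_torus_moves_def by blast
  have "c + 1 < n"
    using assms G(1) by (auto simp: board_def)
  then have "(c + 1) mod n = c + 1"
    by simp
  moreover have "c + 1 < n - 1"
    using assms G(2) \<open>(c + 1) mod n = c + 1\<close> by (auto simp: board_def)
  ultimately show "D \<in> horiz_rect_moves (n - 1) G"
    unfolding horiz_rect_moves_def using D G by auto
next
  fix D assume "D \<in> horiz_rect_moves (n - 1) G"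
  then obtain r c where D: "D = {(r, c), (r, c + 1)}" "r < 2" "c + 1 < n - 1"
    and G: "(r, c) \<in> G" "(r, c + 1) \<in> G"
    unfolding horiz_rect_moves_def by blast
  have "(c + 1) mod n = c + 1"
    using D(3) by simp
  then show "D \<in> horiz_torus_moves n G"
    unfolding horiz_torus_moves_def using D G by (intro CollectI exI[of _ r] exI[of _ c]) simp
qed

lemma torus_moves_eq_rect_moves:
  assumes "G \<subseteq> board (n - 1)"
  shows "torus_moves n p G = rect_moves (n - 1) p G"
proof (cases p)
  case Vera
  then show ?thesis
    using assms by (auto simp: torus_moves_def rect_moves_def vert_moves_def board_def)
next
  case Hepzibah
  then show ?thesis
    using horiz_torus_moves_eq_rect[OF assms] by (simp add: torus_moves_def rect_moves_def)
qed

lemma vert_moves_board: "vert_moves n (board n) = {col c | c. c < n}"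
  by (auto simp: vert_moves_def board_def col_def)

lemma board_minus_last_col: "0 < n \<Longrightarrow> board n - col (n - 1) = board (n - 1)"
  by (auto simp: board_def col_def)

lemma torus_wins_Vera_iff:
  assumes "0 < n"
  shows "wins (torus_moves n) Vera (board n) \<longleftrightarrow> \<not> wins (rect_moves (n - 1)) Hepzibah (board (n - 1))"
proof -
  have "wins (torus_moves n) Vera (board n)
      \<longleftrightarrow> (\<exists>c<n. \<not> wins (torus_moves n) Hepzibah (board n - col c))"
    using wins_iff[OF proper_torus_moves finite_board, of n Vera]
    by (auto simp: torus_moves_def vert_moves_board)
  also have "\<dots> \<longleftrightarrow> \<not> wins (torus_moves n) Hepzibah (board n - col (n - 1))"
  proof -
    have "wins (torus_moves n) Hepzibah (board n - col c)
        \<longleftrightarrow> wins (torus_moves n) Hepzibah (board n - col (n - 1))" if "c < n" for c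
      using wins_torus_minus_col[OF that] wins_torus_minus_col[of "n - 1"] assms by simp
    then show ?thesis
      using assms by (meson diff_less zero_less_one)
  qed
  also have "\<dots> \<longleftrightarrow> \<not> wins (torus_moves n) Hepzibah (board (n - 1))"
    by (simp only: board_minus_last_col[OF assms])
  also have "\<dots> \<longleftrightarrow> \<not> wins (rect_moves (n - 1)) Hepzibah (board (n - 1))"
    by (subst wins_cong[of "board (n - 1)" "torus_moves n" "rect_moves (n - 1)"])
      (simp_all add: torus_moves_eq_rect_moves torus_move_subset)
  finally show ?thesis .
qed

theorem mainTheorem13:
  fixes n :: nat
  assumes "n \<ge> 2"
  shows "(rect_outcome n = OH \<longrightarrow> torus_outcome n = OH)
       \<and> (rect_outcome n = OFirst \<and> rect_outcome (n - 1) \<in> {OFirst, OH}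
            \<longrightarrow> torus_outcome n = OH)
       \<and> (rect_outcome n = OFirst \<and> rect_outcome (n - 1) \<in> {OSecond, OV}
            \<longrightarrow> torus_outcome n = OFirst)
       \<and> (rect_outcome n \<in> {OSecond, OV} \<and> rect_outcome (n - 1) \<in> {OFirst, OH}
            \<longrightarrow> torus_outcome n \<in> {OSecond, OH})"
proof -
  have "wins (torus_moves n) Vera (board n)
      \<longleftrightarrow> \<not> wins (rect_moves (n - 1)) Hepzibah (board (n - 1))"
    using assms by (intro torus_wins_Vera_iff) simp
  then show ?thesis
    using rect_wins_Hepzibah_imp_torus[of n "board n"] torus_wins_Vera_imp_rect[of n "board n"]
    unfolding rect_outcome_def torus_outcome_def outcome_of_def Let_def by auto
qed

end
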